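(* Assume that $f\in\mathcal D(\alpha,\beta)$ and $g\in\mathcal D(a,b)$ for some $\alpha,a\ge 0$ and $\beta,b\in\mathbb R$. Let $h:\mathbb R\to\mathbb R$ be defined by $h(k)=(a-\alpha)k-(b-\beta)$. If $g\ge f$, then $\alpha\le a$, and if moreover $\alpha=a$ then $\beta\ge b$. If $g\ge f$ and $g-f\ge h$, then $(g-f)^c\in\mathcal D(a-\alpha,b-\beta)$.
   Context: For $\alpha\ge0$ and $\beta\in\mathbb R$, $\mathcal D(\alpha,\beta)$ denotes the set of increasing convex functions $f:\mathbb R\to\mathbb R_+$ such that $\lim_{z\to-\infty}f(z)=0$ and $\lim_{z\to\infty}\{f(z)-(\alpha z-\beta)\}=0$. For a function $u:\mathbb R\to\mathbb R$, $u^c$ denotes the largest convex function lying below $u$ (the convex hull). *)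

theory Defs
  imports "HOL-Analysis.Analysis"
begin

definition classD :: "real \<Rightarrow> real \<Rightarrow> (real \<Rightarrow> real) set" where
  "classD \<alpha> \<beta> = {f. mono f \<and> convex_on UNIV f \<and> (\<forall>z. f z \<ge> 0)
     \<and> (f \<longlongrightarrow> 0) at_bot
     \<and> ((\<lambda>z. f z - (\<alpha> * z - \<beta>)) \<longlongrightarrow> 0) at_top}"

text \<open>Convex hull (lower convex envelope) u^c: the pointwise supremum of all convex
  functions lying below u, i.e. the largest convex function below u (when u has a
  convex minorant).\<close>
definition convex_hull_fun :: "(real \<Rightarrow> real) \<Rightarrow> real \<Rightarrow> real" where
  "convex_hull_fun u x = (SUP v \<in> {v. convex_on UNIV v \<and> (\<forall>y. v y \<le> u y)}. v x)"

end

theory Submission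
  imports Defs
begin

text \<open>At \<open>+\<infinity>\<close> the difference \<open>g - f\<close> is asymptotic to the line \<open>h\<close>, so nonnegativity
  of \<open>g - f\<close> forces \<open>h\<close> to have nonnegative slope and, if it is flat, to be nonnegative.
  Under the second hypothesis both \<open>0\<close> and \<open>h\<close> are convex minorants of \<open>g - f\<close>, so the
  convex hull is squeezed between \<open>max 0 h\<close> and \<open>g - f\<close> and inherits the limits at
  \<open>\<plusminus>\<infinity>\<close>; finally, a nonnegative convex function vanishing at \<open>-\<infinity>\<close> is increasing.\<close>

lemma convex_nonneg_tendsto_0_at_bot_imp_mono:
  fixes \<phi> :: "real \<Rightarrow> real"
  assumes cvx: "convex_on UNIV \<phi>" and nonneg: "\<And>z. \<phi> z \<ge> 0"
    and lim: "(\<phi> \<longlongrightarrow> 0) at_bot"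
  shows "mono \<phi>"
proof (rule monoI, rule ccontr)
  fix x y :: real
  assume "x \<le> y" and decr: "\<not> \<phi> x \<le> \<phi> y"
  then have "x < y" by (metis order.order_iff_strict)
  have left_larger: "\<phi> z > \<phi> x" if "z < x" for z
  proof -
    define t where "t = (x - z) / (y - z)"
    have t: "0 < t" "t < 1" using \<open>z < x\<close> \<open>x < y\<close> by (auto simp: t_def field_simps)
    have "t * (y - z) = x - z" using \<open>z < x\<close> \<open>x < y\<close> by (simp add: t_def)
    then have "(1 - t) *\<^sub>R z + t *\<^sub>R y = x" by (simp add: algebra_simps)
    then have "\<phi> x \<le> (1 - t) * \<phi> z + t * \<phi> y"
      using convex_onD[OF cvx, of t z y] t by simp
    also have "\<dots> < (1 - t) * \<phi> z + t * \<phi> x" using t decr by simp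
    finally have "(1 - t) * \<phi> x < (1 - t) * \<phi> z" by (simp add: algebra_simps)
    then show ?thesis using t by simp
  qed
  have "\<phi> x \<le> 0"
  proof (rule tendsto_lowerbound[OF lim])
    show "\<forall>\<^sub>F z in at_bot. \<phi> x \<le> \<phi> z"
      unfolding eventually_at_bot_linorder
      by (rule exI[of _ "x - 1"]) (auto intro!: less_imp_le left_larger)
  qed simp
  moreover have "\<phi> x > 0" using decr nonneg[of y] by simp
  ultimately show False by simp
qed

lemma nonneg_asymptote_slope_nonneg:
  fixes u :: "real \<Rightarrow> real"
  assumes nonneg: "\<And>z. u z \<ge> 0" and asym: "((\<lambda>z. u z - (c * z - d)) \<longlongrightarrow> 0) at_top"
  shows "c \<ge> 0"
proof (rule ccontr)
  assume "\<not> c \<ge> 0"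
  then have "filterlim (\<lambda>z. c * z) at_bot at_top"
    by (intro filterlim_tendsto_neg_mult_at_bot[OF tendsto_const] filterlim_ident) simp
  then have "filterlim (\<lambda>z. c * z - d) at_bot at_top"
    using filterlim_tendsto_add_at_bot_iff[OF tendsto_const, of "- d" "\<lambda>z. c * z"] by simp
  then have "filterlim u at_bot at_top"
    using filterlim_tendsto_add_at_bot_iff[OF asym, of "\<lambda>z. c * z - d"] by simp
  then obtain N where "\<And>z. z \<ge> N \<Longrightarrow> u z \<le> -1"
    by (auto simp: filterlim_at_bot eventually_at_top_linorder)
  then show False using nonneg[of N] by force
qed

definition convex_minorants :: "(real \<Rightarrow> real) \<Rightarrow> (real \<Rightarrow> real) set" where
  "convex_minorants u = {v. convex_on UNIV v \<and> (\<forall>y. v y \<le> u y)}"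

lemma convex_hull_fun_eq_SUP: "convex_hull_fun u x = (SUP v \<in> convex_minorants u. v x)"
  by (simp add: convex_hull_fun_def convex_minorants_def)

lemma bdd_above_convex_minorants: "bdd_above ((\<lambda>v. v x) ` convex_minorants u)"
  by (rule bdd_aboveI[of _ "u x"]) (auto simp: convex_minorants_def)

lemma convex_minorant_le_convex_hull_fun:
  assumes "v \<in> convex_minorants u"
  shows "v x \<le> convex_hull_fun u x"
  unfolding convex_hull_fun_eq_SUP by (rule cSUP_upper[OF assms bdd_above_convex_minorants])

lemma convex_hull_fun_le:
  assumes "convex_minorants u \<noteq> {}"
  shows "convex_hull_fun u x \<le> u x"
  unfolding convex_hull_fun_eq_SUP
  using assms by (intro cSUP_least) (auto simp: convex_minorants_def)

lemma convex_on_convex_hull_fun: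
  assumes "convex_minorants u \<noteq> {}"
  shows "convex_on UNIV (convex_hull_fun u)"
proof (rule convex_onI)
  fix t x y :: real
  assume t: "0 < t" "t < 1"
  show "convex_hull_fun u ((1 - t) *\<^sub>R x + t *\<^sub>R y)
      \<le> (1 - t) * convex_hull_fun u x + t * convex_hull_fun u y"
    unfolding convex_hull_fun_eq_SUP[of u "(1 - t) *\<^sub>R x + t *\<^sub>R y"]
  proof (rule cSUP_least[OF assms])
    fix v
    assume v: "v \<in> convex_minorants u"
    then have "v ((1 - t) *\<^sub>R x + t *\<^sub>R y) \<le> (1 - t) * v x + t * v y"
      using t by (intro convex_onD) (auto simp: convex_minorants_def)
    also have "\<dots> \<le> (1 - t) * convex_hull_fun u x + t * convex_hull_fun u y"
      using t convex_minorant_le_convex_hull_fun[OF v]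
      by (intro add_mono mult_left_mono) auto
    finally show "v ((1 - t) *\<^sub>R x + t *\<^sub>R y)
        \<le> (1 - t) * convex_hull_fun u x + t * convex_hull_fun u y" .
  qed
qed simp

lemma convex_hull_fun_in_classD:
  fixes u :: "real \<Rightarrow> real"
  assumes nonneg: "\<And>z. u z \<ge> 0" and above_line: "\<And>z. u z \<ge> c * z - d"
    and lim_bot: "(u \<longlongrightarrow> 0) at_bot"
    and asym: "((\<lambda>z. u z - (c * z - d)) \<longlongrightarrow> 0) at_top"
  shows "convex_hull_fun u \<in> classD c d"
proof -
  let ?U = "convex_hull_fun u"
  have zero_minorant: "(\<lambda>_. 0) \<in> convex_minorants u"
    using nonneg by (simp add: convex_minorants_def convex_on_const)
  have line_minorant: "(\<lambda>z. c * z - d) \<in> convex_minorants u"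
    using above_line by (auto simp: convex_minorants_def intro!: convex_onI)
      (simp add: algebra_simps)
  have minorants: "convex_minorants u \<noteq> {}" using zero_minorant by blast
  have U_nonneg: "?U z \<ge> 0" for z
    using convex_minorant_le_convex_hull_fun[OF zero_minorant] by simp
  have U_le: "?U z \<le> u z" for z by (rule convex_hull_fun_le[OF minorants])
  have cvx: "convex_on UNIV ?U" by (rule convex_on_convex_hull_fun[OF minorants])
  have U_bot: "(?U \<longlongrightarrow> 0) at_bot"
    by (rule tendsto_sandwich[OF _ _ tendsto_const lim_bot]) (auto simp: U_nonneg U_le)
  have U_top: "((\<lambda>z. ?U z - (c * z - d)) \<longlongrightarrow> 0) at_top"
  proof (rule tendsto_sandwich[OF _ _ tendsto_const asym])
    show "\<forall>\<^sub>F z in at_top. 0 \<le> ?U z - (c * z - d)"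
      using convex_minorant_le_convex_hull_fun[OF line_minorant] by simp
    show "\<forall>\<^sub>F z in at_top. ?U z - (c * z - d) \<le> u z - (c * z - d)"
      using U_le by simp
  qed
  have "mono ?U"
    using convex_nonneg_tendsto_0_at_bot_imp_mono[OF cvx U_nonneg U_bot] .
  then show ?thesis using cvx U_nonneg U_bot U_top by (simp add: classD_def)
qed

lemma classD_diff_asymptote:
  assumes "f \<in> classD \<alpha> \<beta>" and "g \<in> classD a b"
  shows "((\<lambda>z. g z - f z) \<longlongrightarrow> 0) at_bot"
    and "((\<lambda>z. (g z - f z) - ((a - \<alpha>) * z - (b - \<beta>))) \<longlongrightarrow> 0) at_top"
proof -
  have f: "(f \<longlongrightarrow> 0) at_bot" "((\<lambda>z. f z - (\<alpha> * z - \<beta>)) \<longlongrightarrow> 0) at_top"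
    using assms(1) by (auto simp: classD_def)
  have g: "(g \<longlongrightarrow> 0) at_bot" "((\<lambda>z. g z - (a * z - b)) \<longlongrightarrow> 0) at_top"
    using assms(2) by (auto simp: classD_def)
  show "((\<lambda>z. g z - f z) \<longlongrightarrow> 0) at_bot"
    using tendsto_diff[OF g(1) f(1)] by simp
  show "((\<lambda>z. (g z - f z) - ((a - \<alpha>) * z - (b - \<beta>))) \<longlongrightarrow> 0) at_top"
    using tendsto_diff[OF g(2) f(2)] by (simp add: algebra_simps)
qed

theorem lemma2p4:
  fixes f g :: "real \<Rightarrow> real" and \<alpha> \<beta> a b :: real
  assumes "\<alpha> \<ge> 0" and "a \<ge> 0"
    and "f \<in> classD \<alpha> \<beta>" and "g \<in> classD a b"
  defines "h \<equiv> (\<lambda>k. (a - \<alpha>) * k - (b - \<beta>))"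
  shows "((\<forall>z. g z \<ge> f z) \<longrightarrow> \<alpha> \<le> a \<and> (\<alpha> = a \<longrightarrow> \<beta> \<ge> b)) \<and>
         ((\<forall>z. g z \<ge> f z) \<and> (\<forall>k. g k - f k \<ge> h k) \<longrightarrow>
           convex_hull_fun (\<lambda>z. g z - f z) \<in> classD (a - \<alpha>) (b - \<beta>))"
proof (intro conjI impI)
  note asym = classD_diff_asymptote(2)[OF assms(3,4)]
  assume ge: "\<forall>z. g z \<ge> f z"
  then have nonneg: "\<And>z. g z - f z \<ge> 0" by simp
  show "\<alpha> \<le> a" using nonneg_asymptote_slope_nonneg[OF nonneg asym] by simp
  show "\<beta> \<ge> b" if "\<alpha> = a"
  proof -
    have "((\<lambda>z. g z - f z) \<longlongrightarrow> \<beta> - b) at_top"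
      using tendsto_add[OF asym tendsto_const[of "\<beta> - b"]] \<open>\<alpha> = a\<close> by simp
    then have "\<beta> - b \<ge> 0" by (rule tendsto_lowerbound) (simp_all add: ge)
    then show ?thesis by simp
  qed
next
  assume "(\<forall>z. g z \<ge> f z) \<and> (\<forall>k. g k - f k \<ge> h k)"
  then show "convex_hull_fun (\<lambda>z. g z - f z) \<in> classD (a - \<alpha>) (b - \<beta>)"
    using classD_diff_asymptote[OF assms(3,4)]
    by (intro convex_hull_fun_in_classD) (auto simp: h_def)
qed

end
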